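(* For every $k$-uniform hypergraph $H=(V,E)$ on $n$ vertices, $\mathrm{mms}(H)=\mu(H)$.
   Context: For $w:V\to\mathbb R$ and $X\subseteq V$ write $w(X)=\sum_{x\in X}w(x)$. Define $\mathrm{mms}(H)=\min\{|\{e\in E: w(e)\ge 0\}| : w:V\to\mathbb R,\ w(V)\ge 0\}$. A fractional cover of a hypergraph $(V,F)$ is a function $f:V\to[0,\infty)$ with $f(e)\ge 1$ for every $e\in F$; $\tau^*$ is the minimum of $f(V)$ over fractional covers, and $\nu^*$ is the fractional matching number (which equals $\tau^*$ by LP duality). For $E'\subseteq E$ let $H-E'=(V,E\setminus E')$. Define $\mu(H)=\min\{|E'|: E'\subseteq E,\ \nu^*(H-E')=\tau^*(H-E')<n/k\}$. *)

theory Defs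
  imports Complex_Main
begin

definition k_uniform_hypergraph :: "nat \<Rightarrow> 'a set \<Rightarrow> 'a set set \<Rightarrow> bool" where
  "k_uniform_hypergraph k V E \<longleftrightarrow> finite V \<and> (\<forall>e\<in>E. e \<subseteq> V \<and> card e = k)"

definition mms :: "'a set \<Rightarrow> 'a set set \<Rightarrow> nat" where
  "mms V E = Inf {card {e\<in>E. sum w e \<ge> 0} | w :: 'a \<Rightarrow> real. sum w V \<ge> 0}"

definition fractional_cover :: "'a set \<Rightarrow> 'a set set \<Rightarrow> ('a \<Rightarrow> real) \<Rightarrow> bool" where
  "fractional_cover V F f \<longleftrightarrow> (\<forall>v\<in>V. f v \<ge> 0) \<and> (\<forall>e\<in>F. sum f e \<ge> 1)"

definition tau_star :: "'a set \<Rightarrow> 'a set set \<Rightarrow> real" where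
  "tau_star V F = Inf {sum f V | f. fractional_cover V F f}"

definition fractional_matching :: "'a set \<Rightarrow> 'a set set \<Rightarrow> ('a set \<Rightarrow> real) \<Rightarrow> bool" where
  "fractional_matching V F g \<longleftrightarrow> (\<forall>e\<in>F. g e \<ge> 0) \<and> (\<forall>v\<in>V. (\<Sum>e\<in>{e\<in>F. v \<in> e}. g e) \<le> 1)"

definition nu_star :: "'a set \<Rightarrow> 'a set set \<Rightarrow> real" where
  "nu_star V F = Sup {sum g F | g. fractional_matching V F g}"

definition mu :: "nat \<Rightarrow> 'a set \<Rightarrow> 'a set set \<Rightarrow> nat" where
  "mu k V E = Inf {card E' | E'. E' \<subseteq> E \<and> nu_star V (E - E') = tau_star V (E - E')
                       \<and> tau_star V (E - E') < real (card V) / real k}"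

end

(* A weighting w with w(V) >= 0 and a small fractional cover of its negative edges are two
   views of the same object. Shifting w by its maximum M and dividing by kM - m, where m < 0
   bounds the weight of every negative edge, turns w into a fractional cover of the negative
   edges of value below n/k. Conversely, a fractional cover f of value below n/k gives the
   balanced weighting f(V)/n - f, which is negative on every covered edge since
   k f(V)/n < 1 <= f(e). Hence both minima range over the same edge sets up to inclusion.
   The side condition nu* = tau* in mu holds for every hypergraph by LP duality, which follows
   from Farkas' lemma; the latter is proved by Fourier-Motzkin elimination. *)

theory Submission
  imports Defs
begin

type_synonym 'x constraint = "('x \<Rightarrow> real) \<times> real"

definition solves :: "'x set \<Rightarrow> 'x constraint set \<Rightarrow> ('x \<Rightarrow> real) \<Rightarrow> bool" where
  "solves X C x \<longleftrightarrow> (\<forall>c\<in>C. snd c \<le> (\<Sum>w\<in>X. fst c w * x w))"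

definition farkas_certificate :: "'x set \<Rightarrow> 'x constraint set \<Rightarrow> ('x constraint \<Rightarrow> real) \<Rightarrow> bool" where
  "farkas_certificate X C l \<longleftrightarrow>
     (\<forall>c\<in>C. 0 \<le> l c) \<and> (\<forall>w\<in>X. (\<Sum>c\<in>C. l c * fst c w) = 0) \<and> 0 < (\<Sum>c\<in>C. l c * snd c)"

definition conic_combination_of :: "'x constraint set \<Rightarrow> 'x constraint \<Rightarrow> bool" where
  "conic_combination_of C d \<longleftrightarrow> (\<exists>\<rho>. (\<forall>c\<in>C. 0 \<le> \<rho> c) \<and>
     (\<forall>w. fst d w = (\<Sum>c\<in>C. \<rho> c * fst c w)) \<and> snd d = (\<Sum>c\<in>C. \<rho> c * snd c))"

definition fm_combine :: "'x \<Rightarrow> 'x constraint \<Rightarrow> 'x constraint \<Rightarrow> 'x constraint" where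
  "fm_combine v p n =
     (\<lambda>w. - fst n v * fst p w + fst p v * fst n w, - fst n v * snd p + fst p v * snd n)"

definition fm_eliminate :: "'x \<Rightarrow> 'x constraint set \<Rightarrow> 'x constraint set" where
  "fm_eliminate v C = {c\<in>C. fst c v = 0} \<union>
     (\<lambda>(p, n). fm_combine v p n) ` ({p\<in>C. 0 < fst p v} \<times> {n\<in>C. fst n v < 0})"

lemma finite_fm_eliminate: "finite C \<Longrightarrow> finite (fm_eliminate v C)"
  unfolding fm_eliminate_def by auto

lemma fm_eliminate_coeff_zero: "c \<in> fm_eliminate v C \<Longrightarrow> fst c v = 0"
  unfolding fm_eliminate_def fm_combine_def by (auto simp: algebra_simps)

lemma fm_eliminate_conic_combination:
  assumes "finite C" "d \<in> fm_eliminate v C"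
  shows "conic_combination_of C d"
proof -
  from assms(2) consider "d \<in> C"
    | p n where "p \<in> C" "n \<in> C" "0 < fst p v" "fst n v < 0" "d = fm_combine v p n"
    unfolding fm_eliminate_def by auto
  then show ?thesis
  proof cases
    case 1
    then show ?thesis
      unfolding conic_combination_of_def using assms(1)
      by (intro exI[of _ "\<lambda>c. of_bool (c = d)"]) simp
  next
    case 2
    define \<rho> where "\<rho> c = of_bool (c = p) * - fst n v + of_bool (c = n) * fst p v" for c
    have "(\<Sum>c\<in>C. \<rho> c * G c) = - fst n v * G p + fst p v * G n" for G :: "'a constraint \<Rightarrow> real"
      unfolding \<rho>_def using assms(1) 2
      by (simp add: ring_distribs sum.distrib sum_subtractf mult.assoc)
    then show ?thesis
      unfolding conic_combination_of_def using 2
      by (intro exI[of _ \<rho>]) (simp add: \<rho>_def fm_combine_def)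
  qed
qed

lemma real_between_finite:
  fixes f g :: "'b \<Rightarrow> real"
  assumes "finite A" "finite B" "\<And>a b. a \<in> A \<Longrightarrow> b \<in> B \<Longrightarrow> f a \<le> g b"
  obtains t where "\<And>a. a \<in> A \<Longrightarrow> f a \<le> t" "\<And>b. b \<in> B \<Longrightarrow> t \<le> g b"
proof (cases "A = {}")
  case True
  then show ?thesis
    using assms(2) by (intro that[of "Min (insert 0 (g ` B))"]) auto
next
  case False
  then obtain a0 where a0: "a0 \<in> A" "Max (f ` A) = f a0"
    using Max_in[of "f ` A"] assms(1) by blast
  show ?thesis
  proof (rule that)
    show "f a \<le> Max (f ` A)" if "a \<in> A" for a
      using assms(1) that by simp
    show "Max (f ` A) \<le> g b" if "b \<in> B" for b
      using a0 assms(3) that by simp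
  qed
qed

lemma fm_eliminate_solution_extends:
  assumes "finite X" "finite C" "v \<notin> X" "solves X (fm_eliminate v C) x"
  obtains t where "solves (insert v X) C (x(v := t))"
proof -
  define s where "s c = (\<Sum>w\<in>X. fst c w * x w)" for c :: "'a constraint"
  define L where "L c = (snd c - s c) / fst c v" for c :: "'a constraint"
  \<comment> \<open>A constraint with positive (negative) coefficient at \<open>v\<close> bounds \<open>x v\<close> from below
    (above) by \<open>L\<close>; the combined constraints say that no lower bound exceeds an upper bound.\<close>
  have L_sep: "L p \<le> L n" if p: "p \<in> C" "0 < fst p v" and n: "n \<in> C" "fst n v < 0" for p n
  proof -
    have "fm_combine v p n \<in> fm_eliminate v C"
      unfolding fm_eliminate_def using p n by blast
    then have "snd (fm_combine v p n) \<le> s (fm_combine v p n)"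
      using assms(4) unfolding solves_def s_def by blast
    moreover have "s (fm_combine v p n) = - fst n v * s p + fst p v * s n"
      unfolding s_def fm_combine_def
      by (simp add: ring_distribs sum_subtractf sum_negf sum_distrib_left mult.assoc)
    ultimately have "- fst n v * (snd p - s p) + fst p v * (snd n - s n) \<le> 0"
      by (simp add: fm_combine_def algebra_simps)
    then show ?thesis
      unfolding L_def using p n by (simp add: divide_simps algebra_simps)
  qed
  obtain t where
    t_pos: "\<And>p. p \<in> {p\<in>C. 0 < fst p v} \<Longrightarrow> L p \<le> t" and
    t_neg: "\<And>n. n \<in> {n\<in>C. fst n v < 0} \<Longrightarrow> t \<le> L n"
    by (rule real_between_finite[of "{p\<in>C. 0 < fst p v}" "{n\<in>C. fst n v < 0}" L L])
      (use assms(2) L_sep in auto)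
  have "snd c \<le> (\<Sum>w\<in>insert v X. fst c w * (x(v := t)) w)" if c: "c \<in> C" for c
  proof -
    have extend: "(\<Sum>w\<in>insert v X. fst c w * (x(v := t)) w) = fst c v * t + s c"
      unfolding s_def using assms(1,3) by (auto intro!: sum.cong)
    consider "0 < fst c v" | "fst c v < 0" | "fst c v = 0"
      by linarith
    then have "snd c \<le> fst c v * t + s c"
    proof cases
      case 1
      then show ?thesis
        using t_pos[of c] c unfolding L_def by (simp add: pos_divide_le_eq algebra_simps)
    next
      case 2
      then show ?thesis
        using t_neg[of c] c unfolding L_def by (simp add: neg_le_divide_eq algebra_simps)
    next
      case 3
      then have "c \<in> fm_eliminate v C"
        unfolding fm_eliminate_def using c by blast
      then show ?thesis
        using 3 assms(4) unfolding solves_def s_def by simp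
    qed
    with extend show ?thesis
      by simp
  qed
  then show ?thesis
    using that unfolding solves_def by blast
qed

lemma farkas_certificate_lift:
  assumes conic: "\<forall>d\<in>D. conic_combination_of C d"
    and cert: "farkas_certificate X' D l'"
    and vanish: "\<forall>w\<in>X - X'. \<forall>d\<in>D. fst d w = 0"
  shows "\<exists>l. farkas_certificate X C l"
proof -
  obtain \<rho> where \<rho>: "\<forall>d\<in>D. (\<forall>c\<in>C. 0 \<le> \<rho> d c)
      \<and> (\<forall>w. fst d w = (\<Sum>c\<in>C. \<rho> d c * fst c w)) \<and> snd d = (\<Sum>c\<in>C. \<rho> d c * snd c)"
    using bchoice[OF conic[unfolded conic_combination_of_def]] by blast
  define l where "l c = (\<Sum>d\<in>D. l' d * \<rho> d c)" for c
  have combine: "(\<Sum>c\<in>C. l c * G c) = (\<Sum>d\<in>D. l' d * (\<Sum>c\<in>C. \<rho> d c * G c))" for G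
    unfolding l_def by (simp add: sum_distrib_left sum_distrib_right mult.assoc sum.swap[of _ C])
  have "farkas_certificate X C l"
    unfolding farkas_certificate_def
  proof (intro conjI ballI)
    show "0 \<le> l c" if "c \<in> C" for c
      unfolding l_def using that \<rho> cert unfolding farkas_certificate_def
      by (intro sum_nonneg mult_nonneg_nonneg) auto
    show "(\<Sum>c\<in>C. l c * fst c w) = 0" if "w \<in> X" for w
    proof -
      have "(\<Sum>c\<in>C. l c * fst c w) = (\<Sum>d\<in>D. l' d * fst d w)"
        unfolding combine using \<rho> by simp
      also have "\<dots> = 0"
        using that vanish cert unfolding farkas_certificate_def by (cases "w \<in> X'") auto
      finally show ?thesis .
    qed
    have "(\<Sum>c\<in>C. l c * snd c) = (\<Sum>d\<in>D. l' d * snd d)"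
      unfolding combine using \<rho> by simp
    then show "0 < (\<Sum>c\<in>C. l c * snd c)"
      using cert unfolding farkas_certificate_def by simp
  qed
  then show ?thesis by blast
qed

lemma farkas_constraint_set:
  assumes "finite X" "finite C" "\<nexists>x. solves X C x"
  shows "\<exists>l. farkas_certificate X C l"
  using assms
proof (induction X arbitrary: C rule: finite_induct)
  case empty
  then obtain c where "c \<in> C" "0 < snd c"
    unfolding solves_def by fastforce
  then have "farkas_certificate {} C (\<lambda>d. of_bool (d = c))"
    unfolding farkas_certificate_def using empty.prems(1) by simp
  then show ?case by blast
next
  case (insert v X C)
  have "\<nexists>x. solves X (fm_eliminate v C) x"
    using fm_eliminate_solution_extends[OF insert.hyps(1) insert.prems(1) insert.hyps(2)]
      insert.prems(2) by metis
  then obtain l' where "farkas_certificate X (fm_eliminate v C) l'"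
    using insert.IH finite_fm_eliminate[OF insert.prems(1)] by blast
  then show ?case
    using fm_eliminate_conic_combination[OF insert.prems(1)] fm_eliminate_coeff_zero
    by (intro farkas_certificate_lift) auto
qed

lemma farkas:
  fixes X :: "'x set" and I :: "'i set" and A :: "'i \<Rightarrow> 'x \<Rightarrow> real" and B :: "'i \<Rightarrow> real"
  assumes "finite X" "finite I" "\<nexists>x. \<forall>i\<in>I. B i \<le> (\<Sum>w\<in>X. A i w * x w)"
  obtains \<mu> where "\<forall>i\<in>I. 0 \<le> \<mu> i" "\<forall>w\<in>X. (\<Sum>i\<in>I. \<mu> i * A i w) = 0"
    "0 < (\<Sum>i\<in>I. \<mu> i * B i)"
proof -
  define row where "row i = (A i, B i)" for i
  have "\<nexists>x. solves X (row ` I) x"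
    using assms(3) unfolding solves_def row_def by auto
  then obtain l where l: "farkas_certificate X (row ` I) l"
    using farkas_constraint_set assms(1,2) by blast
  \<comment> \<open>Indices sharing the same row split its multiplier equally.\<close>
  define \<mu> where "\<mu> i = l (row i) / card {j\<in>I. row j = row i}" for i
  have spread: "(\<Sum>i\<in>I. \<mu> i * G (row i)) = (\<Sum>c\<in>row ` I. l c * G c)" for G
  proof -
    have "(\<Sum>i\<in>I. \<mu> i * G (row i)) = (\<Sum>c\<in>row ` I. \<Sum>i\<in>{i\<in>I. row i = c}. \<mu> i * G (row i))"
      using assms(2) by (rule sum.image_gen)
    also have "\<dots> = (\<Sum>c\<in>row ` I. l c * G c)"
    proof (rule sum.cong[OF refl])
      fix c assume "c \<in> row ` I"
      then have "card {i\<in>I. row i = c} \<noteq> 0"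
        using assms(2) by auto
      then show "(\<Sum>i\<in>{i\<in>I. row i = c}. \<mu> i * G (row i)) = l c * G c"
        unfolding \<mu>_def by simp
    qed
    finally show ?thesis .
  qed
  show ?thesis
  proof (rule that)
    show "\<forall>i\<in>I. 0 \<le> \<mu> i"
      using l unfolding farkas_certificate_def \<mu>_def by auto
    show "\<forall>w\<in>X. (\<Sum>i\<in>I. \<mu> i * A i w) = 0"
      using l spread[of "\<lambda>c. fst c w" for w] unfolding farkas_certificate_def row_def by auto
    show "0 < (\<Sum>i\<in>I. \<mu> i * B i)"
      using l spread[of snd] unfolding farkas_certificate_def row_def by auto
  qed
qed

lemma farkas_nonneg:
  fixes X :: "'x set" and I :: "'i set" and A :: "'i \<Rightarrow> 'x \<Rightarrow> real" and B :: "'i \<Rightarrow> real"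
  assumes "finite X" "finite I"
    and "\<nexists>x. (\<forall>w\<in>X. 0 \<le> x w) \<and> (\<forall>i\<in>I. B i \<le> (\<Sum>w\<in>X. A i w * x w))"
  obtains \<mu> where "\<forall>i\<in>I. 0 \<le> \<mu> i" "\<forall>w\<in>X. (\<Sum>i\<in>I. \<mu> i * A i w) \<le> 0"
    "0 < (\<Sum>i\<in>I. \<mu> i * B i)"
proof -
  define A' where "A' = case_sum A (\<lambda>u w. of_bool (u = w))"
  define B' :: "'i + 'x \<Rightarrow> real" where "B' = case_sum B (\<lambda>_. 0)"
  have infeasible: "\<nexists>x. \<forall>j\<in>I <+> X. B' j \<le> (\<Sum>w\<in>X. A' j w * x w)"
  proof
    assume "\<exists>x. \<forall>j\<in>I <+> X. B' j \<le> (\<Sum>w\<in>X. A' j w * x w)"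
    then obtain x where x: "\<forall>j\<in>I <+> X. B' j \<le> (\<Sum>w\<in>X. A' j w * x w)" ..
    have "0 \<le> x u" if "u \<in> X" for u
      using x[rule_format, of "Inr u"] that assms(1) by (simp add: A'_def B'_def Plus_def)
    moreover have "B i \<le> (\<Sum>w\<in>X. A i w * x w)" if "i \<in> I" for i
      using x[rule_format, of "Inl i"] that by (simp add: A'_def B'_def Plus_def)
    ultimately show False
      using assms(3) by blast
  qed
  obtain \<mu>' where \<mu>': "\<forall>j\<in>I <+> X. 0 \<le> \<mu>' j"
    "\<forall>w\<in>X. (\<Sum>j\<in>I <+> X. \<mu>' j * A' j w) = 0" "0 < (\<Sum>j\<in>I <+> X. \<mu>' j * B' j)"
    by (rule farkas[of X "I <+> X" B' A']) (use assms(1,2) infeasible in auto)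
  show ?thesis
  proof (rule that[of "\<mu>' \<circ> Inl"])
    show "\<forall>i\<in>I. 0 \<le> (\<mu>' \<circ> Inl) i"
      using \<mu>'(1) by auto
    show "\<forall>w\<in>X. (\<Sum>i\<in>I. (\<mu>' \<circ> Inl) i * A i w) \<le> 0"
    proof
      fix w assume "w \<in> X"
      then have "(\<Sum>i\<in>I. \<mu>' (Inl i) * A i w) + \<mu>' (Inr w) = 0"
        using \<mu>'(2) assms(1,2) by (simp add: sum.Plus A'_def)
      moreover have "0 \<le> \<mu>' (Inr w)"
        using \<mu>'(1) \<open>w \<in> X\<close> by auto
      ultimately show "(\<Sum>i\<in>I. (\<mu>' \<circ> Inl) i * A i w) \<le> 0"
        by simp
    qed
    show "0 < (\<Sum>i\<in>I. (\<mu>' \<circ> Inl) i * B i)"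
      using \<mu>'(3) assms(1,2) by (simp add: sum.Plus B'_def)
  qed
qed

lemma finite_if_edges_subset: "finite V \<Longrightarrow> \<forall>e\<in>F. e \<subseteq> V \<Longrightarrow> finite F"
  using finite_subset[of F "Pow V"] by auto

lemma tau_star_less_iff:
  assumes "fractional_cover V F f0"
  shows "tau_star V F < r \<longleftrightarrow> (\<exists>f. fractional_cover V F f \<and> sum f V < r)"
proof -
  have "bdd_below {sum f V | f. fractional_cover V F f}"
    unfolding fractional_cover_def by (auto intro!: bdd_belowI[of _ 0] sum_nonneg)
  then show ?thesis
    unfolding tau_star_def using assms by (subst cInf_less_iff) auto
qed

lemma fractional_cover_const_1:
  assumes "finite V" "\<forall>e\<in>F. e \<subseteq> V \<and> e \<noteq> {}"
  shows "fractional_cover V F (\<lambda>_. 1)"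
  unfolding fractional_cover_def
proof (intro conjI ballI)
  show "1 \<le> sum (\<lambda>_. 1 :: real) e" if "e \<in> F" for e
    using assms that finite_subset[of e V] by (auto simp: Suc_le_eq card_gt_0_iff)
qed simp

lemma fractional_matching_le_cover:
  assumes "finite V" "\<forall>e\<in>F. e \<subseteq> V"
    and g: "fractional_matching V F g" and f: "fractional_cover V F f"
  shows "sum g F \<le> sum f V"
proof -
  have "finite F"
    using assms(1,2) by (rule finite_if_edges_subset)
  have "sum g F \<le> (\<Sum>e\<in>F. g e * sum f e)"
    using g f unfolding fractional_matching_def fractional_cover_def
    by (intro sum_mono) (auto simp: mult_le_cancel_left1)
  also have "\<dots> = (\<Sum>e\<in>F. \<Sum>v\<in>{v\<in>V. v \<in> e}. g e * f v)"
  proof (rule sum.cong[OF refl])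
    fix e assume "e \<in> F"
    then have "{v\<in>V. v \<in> e} = e"
      using assms(2) by blast
    then show "g e * sum f e = (\<Sum>v\<in>{v\<in>V. v \<in> e}. g e * f v)"
      by (simp add: sum_distrib_left)
  qed
  also have "\<dots> = (\<Sum>v\<in>V. \<Sum>e\<in>{e\<in>F. v \<in> e}. g e * f v)"
    using \<open>finite F\<close> assms(1) by (rule sum.swap_restrict)
  also have "\<dots> = (\<Sum>v\<in>V. f v * (\<Sum>e\<in>{e\<in>F. v \<in> e}. g e))"
    by (simp add: sum_distrib_left mult.commute)
  also have "\<dots> \<le> (\<Sum>v\<in>V. f v)"
    using g f unfolding fractional_matching_def fractional_cover_def
    by (intro sum_mono) (simp add: mult_left_le)
  finally show ?thesis .
qed

lemma small_fractional_cover_if_no_large_matching: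
  assumes "finite V" "\<forall>e\<in>F. e \<subseteq> V" "\<nexists>g. fractional_matching V F g \<and> \<tau> \<le> sum g F"
  obtains f where "fractional_cover V F f" "sum f V < \<tau>"
proof -
  have "finite F"
    using assms(1,2) by (rule finite_if_edges_subset)
  \<comment> \<open>Row \<open>None\<close> demands matching value at least \<open>\<tau>\<close>, row \<open>Some v\<close> load at most 1 on \<open>v\<close>;
    the Farkas multipliers of the vertex rows, divided by that of row \<open>None\<close>, form the cover.\<close>
  define I where "I = insert None (Some ` V)"
  define A :: "'a option \<Rightarrow> 'a set \<Rightarrow> real" where
    "A = case_option (\<lambda>_. 1) (\<lambda>v e. - of_bool (v \<in> e))"
  define B :: "'a option \<Rightarrow> real" where "B = case_option \<tau> (\<lambda>_. - 1)"
  have sum_I: "(\<Sum>i\<in>I. h i) = h None + (\<Sum>v\<in>V. h (Some v))" for h :: "'a option \<Rightarrow> real"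
    unfolding I_def using assms(1) by (simp add: sum.reindex)
  have incidence: "(\<Sum>e\<in>F. of_bool (v \<in> e) * x e) = (\<Sum>e\<in>{e\<in>F. v \<in> e}. x e)"
    for v and x :: "'a set \<Rightarrow> real"
    using \<open>finite F\<close> by (simp add: Int_def)
  have infeasible: "\<nexists>x. (\<forall>e\<in>F. 0 \<le> x e) \<and> (\<forall>i\<in>I. B i \<le> (\<Sum>e\<in>F. A i e * x e))"
  proof
    assume "\<exists>x. (\<forall>e\<in>F. 0 \<le> x e) \<and> (\<forall>i\<in>I. B i \<le> (\<Sum>e\<in>F. A i e * x e))"
    then obtain x where x: "\<forall>e\<in>F. 0 \<le> x e" "\<forall>i\<in>I. B i \<le> (\<Sum>e\<in>F. A i e * x e)"
      by blast
    have "fractional_matching V F x"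
      unfolding fractional_matching_def
      using x incidence unfolding I_def A_def B_def by (auto simp: sum_negf)
    moreover have "\<tau> \<le> sum x F"
      using x(2) unfolding I_def A_def B_def by simp
    ultimately show False
      using assms(3) by blast
  qed
  obtain \<mu> where \<mu>: "\<forall>i\<in>I. 0 \<le> \<mu> i" "\<forall>e\<in>F. (\<Sum>i\<in>I. \<mu> i * A i e) \<le> 0"
    "0 < (\<Sum>i\<in>I. \<mu> i * B i)"
    by (rule farkas_nonneg[of F I B A])
      (use \<open>finite F\<close> assms(1) infeasible in \<open>auto simp: I_def\<close>)
  define s where "s = \<mu> None"
  define f where "f v = \<mu> (Some v)" for v
  have f_nonneg: "0 \<le> f v" if "v \<in> V" for v
    using \<mu>(1) that unfolding f_def I_def by auto
  have s_le: "s \<le> sum f e" if "e \<in> F" for e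
  proof -
    have "V \<inter> {v. v \<in> e} = e"
      using assms(2) that by blast
    then have "(\<Sum>v\<in>V. f v * of_bool (v \<in> e)) = sum f e"
      using assms(1) by simp
    then show ?thesis
      using \<mu>(2)[rule_format, OF that] unfolding sum_I A_def s_def f_def by (simp add: sum_negf)
  qed
  have certificate_value: "sum f V < s * \<tau>"
    using \<mu>(3) unfolding sum_I B_def s_def f_def by (simp add: sum_negf mult.commute)
  have "0 < s"
  proof (rule ccontr)
    assume "\<not> 0 < s"
    then have "sum f V < 0"
      using certificate_value \<mu>(1) unfolding s_def I_def by simp
    then show False
      using f_nonneg sum_nonneg[of V f] by auto
  qed
  show ?thesis
  proof (rule that)
    show "fractional_cover V F (\<lambda>v. f v / s)"
      unfolding fractional_cover_def
      using f_nonneg s_le \<open>0 < s\<close> by (simp add: sum_divide_distrib[symmetric])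
    show "(\<Sum>v\<in>V. f v / s) < \<tau>"
      using certificate_value \<open>0 < s\<close>
      by (simp add: sum_divide_distrib[symmetric] divide_less_eq mult.commute)
  qed
qed

lemma nu_star_eq_tau_star:
  assumes "finite V" "\<forall>e\<in>F. e \<subseteq> V \<and> e \<noteq> {}"
  shows "nu_star V F = tau_star V F"
proof -
  have cover: "fractional_cover V F (\<lambda>_. 1)"
    using assms by (rule fractional_cover_const_1)
  have matching_le_tau: "sum g F \<le> tau_star V F" if "fractional_matching V F g" for g
    using fractional_matching_le_cover[OF assms(1) _ that] assms(2) tau_star_less_iff[OF cover]
    by (meson not_le order_less_le_trans)
  have "\<exists>g. fractional_matching V F g \<and> tau_star V F \<le> sum g F"
  proof (rule ccontr)
    assume "\<nexists>g. fractional_matching V F g \<and> tau_star V F \<le> sum g F"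
    then obtain f where "fractional_cover V F f" "sum f V < tau_star V F"
      using small_fractional_cover_if_no_large_matching[OF assms(1)] assms(2) by blast
    then show False
      using tau_star_less_iff[OF cover] by auto
  qed
  then obtain g where g: "fractional_matching V F g" "tau_star V F \<le> sum g F"
    by blast
  have "fractional_matching V F (\<lambda>_. 0)"
    unfolding fractional_matching_def by simp
  then have "nu_star V F \<le> tau_star V F"
    unfolding nu_star_def using matching_le_tau by (intro cSup_least) auto
  moreover have "tau_star V F \<le> nu_star V F"
    unfolding nu_star_def using g matching_le_tau
    by (intro cSup_upper2[of "sum g F"]) (auto intro!: bdd_aboveI[of _ "tau_star V F"])
  ultimately show ?thesis
    by simp
qed

lemma small_cover_from_weighting:
  fixes w :: "'a \<Rightarrow> real"
  assumes "finite V" "V \<noteq> {}" "1 \<le> k" "\<forall>e\<in>F. e \<subseteq> V \<and> card e = k"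
    and "0 \<le> sum w V" "\<forall>e\<in>F. sum w e < 0"
  obtains f where "fractional_cover V F f" "sum f V < card V / k"
proof -
  have "finite F"
    using assms(1,4) finite_if_edges_subset[of V F] by blast
  define M where "M = Max (w ` V)"
  \<comment> \<open>The extra element \<open>-1\<close> keeps \<open>m\<close> negative also when \<open>F = {}\<close>.\<close>
  define m where "m = Max (insert (-1) ((\<lambda>e. sum w e) ` F))"
  have w_le_M: "w v \<le> M" if "v \<in> V" for v
    unfolding M_def using assms(1) that by simp
  have "m < 0" and edge_le_m: "\<And>e. e \<in> F \<Longrightarrow> sum w e \<le> m"
    unfolding m_def using \<open>finite F\<close> assms(6) by auto
  have "0 \<le> card V * M"
    using assms(5) w_le_M sum_bounded_above[of V w M] by simp
  moreover have "0 < card V"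
    using assms(1,2) by (simp add: card_gt_0_iff)
  ultimately have "0 \<le> M"
    by (simp add: zero_le_mult_iff)
  define D where "D = k * M - m"
  have "0 \<le> k * M"
    using \<open>0 \<le> M\<close> by simp
  then have "0 < D"
    unfolding D_def using \<open>m < 0\<close> by linarith
  define f where "f v = (M - w v) / D" for v
  show ?thesis
  proof (rule that)
    show "fractional_cover V F f"
      unfolding fractional_cover_def
    proof (intro conjI ballI)
      show "0 \<le> f v" if "v \<in> V" for v
        unfolding f_def using w_le_M[OF that] \<open>0 < D\<close> by simp
      show "1 \<le> sum f e" if "e \<in> F" for e
      proof -
        have "sum f e = (k * M - sum w e) / D"
          unfolding f_def using assms(4) that
          by (simp add: sum_divide_distrib[symmetric] sum_subtractf)
        then show ?thesis
          using edge_le_m[OF that] \<open>0 < D\<close> unfolding D_def by simp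
      qed
    qed
    have "sum f V = (card V * M - sum w V) / D"
      unfolding f_def by (simp add: sum_divide_distrib[symmetric] sum_subtractf)
    also have "\<dots> \<le> card V * M / D"
      using assms(5) \<open>0 < D\<close> by (simp add: divide_right_mono)
    also have "\<dots> < card V / k"
    proof -
      have "card V * M * k < card V * D"
        unfolding D_def using \<open>0 < card V\<close> \<open>m < 0\<close> by (simp add: algebra_simps mult_neg_pos)
      then show ?thesis
        using \<open>0 < D\<close> assms(3) by (simp add: divide_simps mult.commute mult.left_commute)
    qed
    finally show "sum f V < card V / k" .
  qed
qed

lemma balanced_weighting_from_small_cover:
  fixes f :: "'a \<Rightarrow> real"
  assumes "finite V" "\<forall>e\<in>F. card e = k" "fractional_cover V F f" "sum f V < card V / k"
  obtains w :: "'a \<Rightarrow> real" where "sum w V = 0" "\<forall>e\<in>F. sum w e < 0"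
proof -
  have "0 \<le> sum f V"
    using assms(3) unfolding fractional_cover_def by (simp add: sum_nonneg)
  with assms(4) have "0 < real (card V) / k"
    by linarith
  then have "0 < card V" "0 < k"
    by (auto simp: zero_less_divide_iff)
  define c where "c = sum f V / card V"
  have "k * c < 1"
    unfolding c_def using assms(4) \<open>0 < card V\<close> \<open>0 < k\<close>
    by (simp add: divide_simps mult.commute)
  show ?thesis
  proof (rule that[of "\<lambda>v. c - f v"])
    show "(\<Sum>v\<in>V. c - f v) = 0"
      unfolding c_def using \<open>0 < card V\<close> by (simp add: sum_subtractf)
    show "\<forall>e\<in>F. (\<Sum>v\<in>e. c - f v) < 0"
    proof
      fix e assume "e \<in> F"
      then have "1 \<le> sum f e" "card e = k"
        using assms(2,3) unfolding fractional_cover_def by auto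
      then show "(\<Sum>v\<in>e. c - f v) < 0"
        using \<open>k * c < 1\<close> by (simp add: sum_subtractf)
    qed
  qed
qed

lemma k_uniform_nu_star_eq_tau_star:
  assumes "k_uniform_hypergraph k V E" "1 \<le> k" "F \<subseteq> E"
  shows "nu_star V F = tau_star V F"
proof (rule nu_star_eq_tau_star)
  show "finite V"
    using assms(1) unfolding k_uniform_hypergraph_def by simp
  show "\<forall>e\<in>F. e \<subseteq> V \<and> e \<noteq> {}"
  proof
    fix e assume "e \<in> F"
    then have "e \<subseteq> V" "card e = k"
      using assms(1,3) unfolding k_uniform_hypergraph_def by auto
    then show "e \<subseteq> V \<and> e \<noteq> {}"
      using assms(2) by auto
  qed
qed

lemma mu_le_mms:
  assumes "k_uniform_hypergraph k V E" "1 \<le> k" "V \<noteq> {}"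
  shows "mu k V E \<le> mms V E"
  unfolding mu_def mms_def
proof (rule cInf_mono)
  have "0 \<le> sum (\<lambda>_. 0 :: real) V"
    by simp
  then show "{card {e\<in>E. 0 \<le> sum w e} | w :: 'a \<Rightarrow> real. 0 \<le> sum w V} \<noteq> {}"
    by blast
next
  fix a assume "a \<in> {card {e\<in>E. 0 \<le> sum w e} | w :: 'a \<Rightarrow> real. 0 \<le> sum w V}"
  then obtain w :: "'a \<Rightarrow> real" where w: "0 \<le> sum w V" "a = card {e\<in>E. 0 \<le> sum w e}"
    by blast
  define E' where "E' = {e\<in>E. 0 \<le> sum w e}"
  have "finite V" "\<forall>e\<in>E - E'. e \<subseteq> V \<and> card e = k"
    using assms(1) unfolding k_uniform_hypergraph_def by auto
  moreover have "\<forall>e\<in>E - E'. sum w e < 0"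
    unfolding E'_def by auto
  ultimately obtain f where "fractional_cover V (E - E') f" "sum f V < card V / k"
    using small_cover_from_weighting assms(2,3) w(1) by metis
  then have "tau_star V (E - E') < card V / k"
    using tau_star_less_iff[of V "E - E'" f] by blast
  moreover have "nu_star V (E - E') = tau_star V (E - E')"
    using assms(1,2) by (rule k_uniform_nu_star_eq_tau_star) blast
  moreover have "E' \<subseteq> E" "a = card E'"
    unfolding E'_def w(2) by auto
  ultimately show "\<exists>b\<in>{card E' | E'. E' \<subseteq> E \<and> nu_star V (E - E') = tau_star V (E - E')
      \<and> tau_star V (E - E') < real (card V) / real k}. b \<le> a"
    by blast
qed simp

lemma mms_le_mu:
  assumes "k_uniform_hypergraph k V E" "1 \<le> k" "V \<noteq> {}"
  shows "mms V E \<le> mu k V E"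
  unfolding mu_def mms_def
proof (rule cInf_mono)
  show "{card E' | E'. E' \<subseteq> E \<and> nu_star V (E - E') = tau_star V (E - E')
      \<and> tau_star V (E - E') < real (card V) / real k} \<noteq> {}"
  proof -
    have "fractional_cover V (E - E) (\<lambda>_. 0)"
      unfolding fractional_cover_def by simp
    moreover have "0 < real (card V) / k"
      using assms by (simp add: card_gt_0_iff k_uniform_hypergraph_def)
    ultimately have "tau_star V (E - E) < card V / k"
      using tau_star_less_iff by fastforce
    moreover have "nu_star V (E - E) = tau_star V (E - E)"
      using assms(1,2) by (rule k_uniform_nu_star_eq_tau_star) blast
    ultimately show ?thesis
      by blast
  qed
next
  fix b assume "b \<in> {card E' | E'. E' \<subseteq> E \<and> nu_star V (E - E') = tau_star V (E - E')
      \<and> tau_star V (E - E') < real (card V) / real k}"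
  then obtain E' where E': "b = card E'" "E' \<subseteq> E" "tau_star V (E - E') < card V / k"
    by blast
  have "finite V" and edges: "\<forall>e\<in>E. e \<subseteq> V \<and> card e = k"
    using assms(1) unfolding k_uniform_hypergraph_def by auto
  then have "fractional_cover V (E - E') (\<lambda>_. 1)"
    using assms(2) by (intro fractional_cover_const_1) auto
  then obtain f where "fractional_cover V (E - E') f" "sum f V < card V / k"
    using tau_star_less_iff E'(3) by blast
  moreover have "\<forall>e\<in>E - E'. card e = k"
    using edges by blast
  ultimately obtain w :: "'a \<Rightarrow> real" where w: "sum w V = 0" "\<forall>e\<in>E - E'. sum w e < 0"
    using balanced_weighting_from_small_cover[OF \<open>finite V\<close>] by blast
  have "finite E'"
    using E'(2) \<open>finite V\<close> edges finite_if_edges_subset[of V E'] by blast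
  moreover have "{e\<in>E. 0 \<le> sum w e} \<subseteq> E'"
    using w(2) by force
  ultimately have "card {e\<in>E. 0 \<le> sum w e} \<le> b"
    unfolding E'(1) by (rule card_mono)
  moreover have "card {e\<in>E. 0 \<le> sum w e} \<in> {card {e\<in>E. 0 \<le> sum w e} | w :: 'a \<Rightarrow> real. 0 \<le> sum w V}"
    using w(1) by force
  ultimately show "\<exists>a\<in>{card {e\<in>E. 0 \<le> sum w e} | w :: 'a \<Rightarrow> real. 0 \<le> sum w V}. a \<le> b"
    by blast
qed simp

theorem theorem1:
  fixes V :: "'a set" and E :: "'a set set" and k :: nat
  assumes "k_uniform_hypergraph k V E" and "k \<ge> 1" and "V \<noteq> {}"
  shows "mms V E = mu k V E"
  using mms_le_mu[OF assms] mu_le_mms[OF assms] by (rule antisym)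

end
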